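(* Let $D$ be a directed graph whose minimum feedback vertex set has cardinality exactly one. Then for an integer $q\ge 2$, $D$ is $q$-solvable if and only if $q=2$.
   Context: A directed graph $D=(V,E)$ has arcs $E \subseteq \{(u,v)\in V^2 : u \neq v\}$ (bidirectional pairs allowed, forming directed cycles of length 2). A feedback vertex set is a set $S\subseteq V$ such that $D-S$ contains no directed cycle. $N^-(v)=\{u:(u,v)\in E\}$. For $q\ge2$ let $[q]=\{0,\dots,q-1\}$. A $D$-function over $[q]$ is a map $f=(f_v)_{v\in V}:[q]^V\to[q]^V$ with each $f_v(x)$ depending only on $(x_u)_{u\in N^-(v)}$. $D$ is $q$-solvable if some $D$-function $f$ over $[q]$ has the property that for every $x\in[q]^V$ there is $v$ with $f_v(x)=x_v$. *)

theory Defs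
  imports "HOL-Library.FuncSet"
begin

definition digraph :: "'a set \<Rightarrow> ('a \<times> 'a) set \<Rightarrow> bool" where
  "digraph V E \<longleftrightarrow> finite V \<and> E \<subseteq> V \<times> V \<and> (\<forall>u. (u, u) \<notin> E)"

definition feedback_vertex_set :: "'a set \<Rightarrow> ('a \<times> 'a) set \<Rightarrow> 'a set \<Rightarrow> bool" where
  "feedback_vertex_set V E S \<longleftrightarrow> S \<subseteq> V \<and> acyclic (E \<inter> ((V - S) \<times> (V - S)))"

definition min_fvs_card :: "'a set \<Rightarrow> ('a \<times> 'a) set \<Rightarrow> nat" where
  "min_fvs_card V E = (LEAST k. \<exists>S. feedback_vertex_set V E S \<and> card S = k)"

definition in_nbrs :: "('a \<times> 'a) set \<Rightarrow> 'a \<Rightarrow> 'a set" where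
  "in_nbrs E v = {u. (u, v) \<in> E}"

definition configs :: "'a set \<Rightarrow> nat \<Rightarrow> ('a \<Rightarrow> nat) set" where
  "configs V q = V \<rightarrow>\<^sub>E {..<q}"

definition D_function :: "'a set \<Rightarrow> ('a \<times> 'a) set \<Rightarrow> nat \<Rightarrow> (('a \<Rightarrow> nat) \<Rightarrow> ('a \<Rightarrow> nat)) \<Rightarrow> bool" where
  "D_function V E q f \<longleftrightarrow>
     (\<forall>x \<in> configs V q. f x \<in> configs V q) \<and>
     (\<forall>v \<in> V. \<forall>x \<in> configs V q. \<forall>y \<in> configs V q.
        (\<forall>u \<in> in_nbrs E v. x u = y u) \<longrightarrow> f x v = f y v)"

definition q_solvable :: "'a set \<Rightarrow> ('a \<times> 'a) set \<Rightarrow> nat \<Rightarrow> bool" where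
  "q_solvable V E q \<longleftrightarrow>
     (\<exists>f. D_function V E q f \<and> (\<forall>x \<in> configs V q. \<exists>v \<in> V. f x v = x v))"

end

theory Submission
  imports Defs
begin

text \<open>
  If D contains a directed cycle through z, entering z from u, then D is 2-solvable: in a
  breadth-first in-tree from z every reached vertex copies its parent, and z copies u corrected
  by the parity of the depth of u. A configuration without fixed point would alternate along the
  tree, which forces z to be a fixed point after all.

  If removing a single vertex w makes D acyclic and q \<ge> 3, no D-function f works. Peeling off
  sinks of D - w one at a time, the value at each vertex v \<noteq> w can be chosen to differ from both
  f_v(x, x_w = 0) and f_v(x, x_w = 1), without disturbing the vertices handled before (a sink is
  an in-neighbour of none of them). Since f_w does not depend on x_w, one of the two choices of
  x_w then avoids f_w as well, giving a configuration without fixed point.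
\<close>

lemma configs_upd:
  assumes "x \<in> configs V q" "s \<in> V" "c < q"
  shows "x(s := c) \<in> configs V q"
  using assms unfolding configs_def PiE_def extensional_def by auto

lemma configs_less: "x \<in> configs V q \<Longrightarrow> v \<in> V \<Longrightarrow> x v < q"
  unfolding configs_def by auto

lemma digraph_not_in_nbrs_self: "digraph V E \<Longrightarrow> v \<notin> in_nbrs E v"
  unfolding digraph_def in_nbrs_def by auto

lemma D_function_cong:
  assumes "D_function V E q f" "x \<in> configs V q" "y \<in> configs V q" "v \<in> V"
    "\<forall>u \<in> in_nbrs E v. x u = y u"
  shows "f x v = f y v"
  using assms unfolding D_function_def by blast

lemma D_function_upd_not_in_nbrs:
  assumes "D_function V E q f" "x \<in> configs V q" "x(s := c) \<in> configs V q" "v \<in> V"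
    "s \<notin> in_nbrs E v"
  shows "f (x(s := c)) v = f x v"
  using D_function_cong[OF assms(1,3,2,4)] assms(5) by auto

lemma ex_less_notin:
  assumes "finite B" "card B < q"
  shows "\<exists>c < q. c \<notin> B"
proof (rule ccontr)
  assume "\<not> ?thesis"
  then have "card {..<q} \<le> card B" by (intro card_mono[OF assms(1)]) auto
  then show False using assms(2) by simp
qed

lemma acyclic_finite_sink:
  assumes "acyclic R" "finite U" "U \<noteq> {}"
  obtains s where "s \<in> U" "\<And>v. v \<in> U \<Longrightarrow> (s, v) \<notin> R"
proof -
  let ?R = "R \<inter> U \<times> U"
  have "finite ?R" using assms(2) by (simp add: finite_subset[of _ "U \<times> U"])
  moreover have "acyclic ?R" using assms(1) by (rule acyclic_subset) blast
  ultimately have "wf (?R\<inverse>)" by (rule finite_acyclic_wf_converse)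
  then obtain s where "s \<in> U" "\<And>v. (v, s) \<in> ?R\<inverse> \<Longrightarrow> v \<notin> U"
    using wfE_min'[OF _ assms(3)] by blast
  then show thesis using that by blast
qed

lemma D_function_avoid_off_feedback_vertex:
  assumes dg: "digraph V E" and fvs: "feedback_vertex_set V E {w}"
    and f: "D_function V E q f" and k: "k < q"
    and "finite U" "U \<subseteq> V - {w}"
  shows "\<exists>y \<in> configs V q. \<forall>v \<in> U. \<forall>a < k. f (y(w := a)) v \<noteq> y v"
  using \<open>finite U\<close> \<open>U \<subseteq> V - {w}\<close>
proof (induction U rule: finite_psubset_induct)
  case (psubset U)
  have w: "w \<in> V" and ac: "acyclic (E \<inter> (V - {w}) \<times> (V - {w}))"
    using fvs unfolding feedback_vertex_set_def by auto
  show ?case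
  proof (cases "U = {}")
    case True
    have "restrict (\<lambda>_. 0) V \<in> configs V q"
      using k unfolding configs_def by (simp add: restrict_PiE_iff)
    then show ?thesis using True by blast
  next
    case False
    obtain s where s: "s \<in> U"
      and sink: "\<And>v. v \<in> U \<Longrightarrow> (s, v) \<notin> E \<inter> (V - {w}) \<times> (V - {w})"
      using acyclic_finite_sink[OF ac psubset.hyps False] by blast
    have sV: "s \<in> V" "s \<noteq> w" using s psubset.prems by auto
    have "U - {s} \<subset> U" "U - {s} \<subseteq> V - {w}" using s psubset.prems by auto
    then obtain y where y: "y \<in> configs V q"
      and avoid: "\<forall>v \<in> U - {s}. \<forall>a < k. f (y(w := a)) v \<noteq> y v"
      using psubset.IH by blast
    have yw: "y(w := a) \<in> configs V q" if "a < k" for a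
      using configs_upd[OF y w] that k by simp
    have "card ((\<lambda>a. f (y(w := a)) s) ` {..<k}) \<le> k"
      using card_image_le[OF finite_lessThan] by (metis card_lessThan)
    then have "finite ((\<lambda>a. f (y(w := a)) s) ` {..<k})"
      "card ((\<lambda>a. f (y(w := a)) s) ` {..<k}) < q"
      using k by auto
    then obtain c where "c < q" "c \<notin> (\<lambda>a. f (y(w := a)) s) ` {..<k}"
      using ex_less_notin by blast
    then have c: "c < q" "\<forall>a < k. f (y(w := a)) s \<noteq> c" by auto
    have not_nbr: "s \<notin> in_nbrs E v" if "v \<in> U" for v
      using sink s that psubset.prems digraph_not_in_nbrs_self[OF dg, of s]
      unfolding in_nbrs_def by auto
    have unchanged: "f (y(s := c, w := a)) v = f (y(w := a)) v" if "v \<in> U" "a < k" for v a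
    proof -
      have "v \<in> V" using that psubset.prems by auto
      have "(y(w := a))(s := c) \<in> configs V q"
        using configs_upd[OF yw[OF \<open>a < k\<close>] sV(1) c(1)] .
      then have "f ((y(w := a))(s := c)) v = f (y(w := a)) v"
        using D_function_upd_not_in_nbrs[OF f yw[OF \<open>a < k\<close>]] \<open>v \<in> V\<close>
          not_nbr[OF \<open>v \<in> U\<close>]
        by blast
      then show ?thesis using fun_upd_twist[OF sV(2), of y c a] by simp
    qed
    have "\<forall>v \<in> U. \<forall>a < k. f (y(s := c, w := a)) v \<noteq> (y(s := c)) v"
      using unchanged avoid c(2) by auto
    then show ?thesis using configs_upd[OF y sV(1) c(1)] by blast
  qed
qed

theorem not_q_solvable_if_feedback_vertex:
  assumes dg: "digraph V E" and fvs: "feedback_vertex_set V E {w}" and q: "3 \<le> q"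
  shows "\<not> q_solvable V E q"
proof
  assume "q_solvable V E q"
  then obtain f where f: "D_function V E q f"
    and fixed: "\<forall>x \<in> configs V q. \<exists>v \<in> V. f x v = x v"
    unfolding q_solvable_def by blast
  have w: "w \<in> V" using fvs unfolding feedback_vertex_set_def by simp
  have "finite V" using dg unfolding digraph_def by simp
  then obtain y where y: "y \<in> configs V q"
    and avoid: "\<forall>v \<in> V - {w}. \<forall>a < 2. f (y(w := a)) v \<noteq> y v"
    using D_function_avoid_off_feedback_vertex[OF dg fvs f, of 2 "V - {w}"] q by auto
  define a :: nat where "a = (if f (y(w := 0)) w = 0 then 1 else 0)"
  have a: "a < 2" "y(w := a) \<in> configs V q" using configs_upd[OF y w] q by (auto simp: a_def)
  have y0: "y(w := 0) \<in> configs V q" using configs_upd[OF y w] q by simp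
  have "f ((y(w := 0))(w := a)) w = f (y(w := 0)) w"
    using a(2)
    by (intro D_function_upd_not_in_nbrs[OF f y0 _ w digraph_not_in_nbrs_self[OF dg]]) simp
  then have "f (y(w := a)) w \<noteq> a" by (simp add: a_def)
  then have "\<forall>v \<in> V. f (y(w := a)) v \<noteq> (y(w := a)) v" using avoid a(1) by auto
  then show False using fixed a(2) by blast
qed

definition walk_dist :: "('a \<times> 'a) set \<Rightarrow> 'a \<Rightarrow> 'a \<Rightarrow> nat" where
  "walk_dist E z v = (LEAST n. (z, v) \<in> E ^^ n)"

lemma relpow_walk_dist: "(z, v) \<in> E\<^sup>* \<Longrightarrow> (z, v) \<in> E ^^ walk_dist E z v"
  unfolding walk_dist_def by (rule LeastI_ex) (simp add: rtrancl_power)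

lemma walk_dist_eq_0_iff: "(z, v) \<in> E\<^sup>* \<Longrightarrow> walk_dist E z v = 0 \<longleftrightarrow> v = z"
  using relpow_walk_dist[of z v E] by (auto simp: walk_dist_def)

lemma walk_dist_parent:
  assumes "(z, v) \<in> E\<^sup>*" "v \<noteq> z"
  shows "\<exists>p. (p, v) \<in> E \<and> (z, p) \<in> E\<^sup>* \<and> walk_dist E z v = Suc (walk_dist E z p)"
proof -
  let ?P = "\<lambda>w n. (z, w) \<in> E ^^ n"
  obtain n where n: "walk_dist E z v = Suc n"
    using walk_dist_eq_0_iff[OF assms(1)] assms(2) not0_implies_Suc by blast
  have "(z, v) \<in> E ^^ Suc n" using relpow_walk_dist[OF assms(1)] unfolding n .
  then obtain p where zp: "(z, p) \<in> E ^^ n" and pv: "(p, v) \<in> E" by (rule relpow_Suc_E)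
  have zp': "(z, p) \<in> E\<^sup>*" using zp rtrancl_power by blast
  have "walk_dist E z p \<le> n"
    unfolding walk_dist_def by (rule Least_le[where P = "?P p", OF zp])
  moreover have "(z, v) \<in> E ^^ Suc (walk_dist E z p)"
    using relpow_Suc_I[OF relpow_walk_dist[OF zp'] pv] .
  then have "walk_dist E z v \<le> Suc (walk_dist E z p)"
    unfolding walk_dist_def[of E z v] by (rule Least_le[where P = "?P v"])
  ultimately show ?thesis using n pv zp' by auto
qed

lemma parity_along_parent:
  fixes x :: "'a \<Rightarrow> nat"
  assumes parent: "\<And>v. (z, v) \<in> E\<^sup>* \<Longrightarrow> v \<noteq> z \<Longrightarrow>
      (z, p v) \<in> E\<^sup>* \<and> walk_dist E z v = Suc (walk_dist E z (p v)) \<and> x v \<noteq> x (p v)"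
    and binary: "\<And>v. (z, v) \<in> E\<^sup>* \<Longrightarrow> x v < 2"
    and "(z, v) \<in> E\<^sup>*"
  shows "x v = (x z + walk_dist E z v) mod 2"
  using \<open>(z, v) \<in> E\<^sup>*\<close>
proof (induction "walk_dist E z v" arbitrary: v)
  case 0
  then have "v = z" using walk_dist_eq_0_iff by metis
  then show ?case using binary[OF \<open>(z, v) \<in> E\<^sup>*\<close>] 0(1) by simp
next
  case (Suc n)
  have "v \<noteq> z" using walk_dist_eq_0_iff[OF Suc.prems] Suc.hyps(2) by simp
  then have pv: "(z, p v) \<in> E\<^sup>*" "walk_dist E z (p v) = n" "x v \<noteq> x (p v)"
    using parent[OF Suc.prems] Suc.hyps(2) by auto
  have "x (p v) = (x z + n) mod 2" using Suc.hyps(1)[OF pv(2)[symmetric] pv(1)] pv(2) by simp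
  moreover have "x v < 2" "x (p v) < 2" using binary Suc.prems pv(1) by auto
  ultimately show ?case using pv(3) Suc.hyps(2) by presburger
qed

theorem q_solvable_2_if_cycle:
  assumes dg: "digraph V E" and cyc: "\<not> acyclic E"
  shows "q_solvable V E 2"
proof -
  have EV: "E \<subseteq> V \<times> V" using dg unfolding digraph_def by simp
  obtain z u where zu: "(z, u) \<in> E\<^sup>*" and uz: "(u, z) \<in> E"
    using cyc unfolding acyclic_def by (metis tranclD2)
  have zV: "z \<in> V" and u: "u \<in> in_nbrs E z" using uz EV by (auto simp: in_nbrs_def)
  define d where "d = walk_dist E z"
  have "\<forall>v. \<exists>p. (z, v) \<in> E\<^sup>* \<and> v \<noteq> z \<longrightarrow>
      (p, v) \<in> E \<and> (z, p) \<in> E\<^sup>* \<and> d v = Suc (d p)"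
    unfolding d_def by (metis walk_dist_parent)
  then obtain p where p: "\<And>v. (z, v) \<in> E\<^sup>* \<Longrightarrow> v \<noteq> z \<Longrightarrow>
      (p v, v) \<in> E \<and> (z, p v) \<in> E\<^sup>* \<and> d v = Suc (d (p v))"
    by (metis choice)
  have p_nbr: "p v \<in> in_nbrs E v" "p v \<in> V" "v \<in> V" if "(z, v) \<in> E\<^sup>*" "v \<noteq> z" for v
    using p[OF that] EV unfolding in_nbrs_def by auto
  define f where "f x = restrict (\<lambda>v. if v = z then (x u + d u) mod 2
      else if (z, v) \<in> E\<^sup>* then x (p v) else 0) V" for x :: "'a \<Rightarrow> nat"
  have "D_function V E 2 f"
    unfolding D_function_def
  proof (intro conjI ballI impI)
    fix x assume x: "x \<in> configs V 2"
    then show "f x \<in> configs V 2"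
      using p_nbr configs_less[OF x] unfolding f_def configs_def
      by (auto simp: restrict_PiE_iff)
  next
    fix v and x y :: "'a \<Rightarrow> nat" assume "\<forall>u \<in> in_nbrs E v. x u = y u"
    then show "f x v = f y v" unfolding f_def using u p_nbr by auto
  qed
  moreover have "\<exists>v \<in> V. f x v = x v" if x: "x \<in> configs V 2" for x :: "'a \<Rightarrow> nat"
  proof (rule ccontr)
    assume "\<not> (\<exists>v \<in> V. f x v = x v)"
    then have "x v \<noteq> x (p v)" if "(z, v) \<in> E\<^sup>*" "v \<noteq> z" for v
      using that p_nbr[OF that] unfolding f_def by force
    moreover have "x v < 2" if "(z, v) \<in> E\<^sup>*" for v
      using configs_less[OF x] zV p_nbr(3)[OF that] by (cases "v = z") auto
    ultimately have "x u = (x z + d u) mod 2"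
      using parity_along_parent[of z E p x u] p zu unfolding d_def by blast
    moreover have "f x z = (x u + d u) mod 2" using zV unfolding f_def by simp
    moreover have "x z < 2" using configs_less[OF x zV] .
    ultimately have "f x z = x z" by presburger
    with \<open>\<not> (\<exists>v \<in> V. f x v = x v)\<close> zV show False by blast
  qed
  ultimately show ?thesis unfolding q_solvable_def by blast
qed

lemma feedback_vertex_set_empty_iff:
  "E \<subseteq> V \<times> V \<Longrightarrow> feedback_vertex_set V E {} \<longleftrightarrow> acyclic E"
  unfolding feedback_vertex_set_def by (simp add: Int_absorb2)

lemma min_fvs_card_le: "feedback_vertex_set V E S \<Longrightarrow> min_fvs_card V E \<le> card S"
  unfolding min_fvs_card_def
  by (rule Least_le[where P = "\<lambda>k. \<exists>S. feedback_vertex_set V E S \<and> card S = k"]) blast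

lemma min_fvs_card_attained: "\<exists>S. feedback_vertex_set V E S \<and> card S = min_fvs_card V E"
proof -
  have "feedback_vertex_set V E V" unfolding feedback_vertex_set_def by (simp add: acyclic_def)
  then have "\<exists>k S. feedback_vertex_set V E S \<and> card S = k" by blast
  then show ?thesis unfolding min_fvs_card_def
    by (rule LeastI_ex[where P = "\<lambda>k. \<exists>S. feedback_vertex_set V E S \<and> card S = k"])
qed

theorem corollary12:
  fixes V :: "'a set" and E :: "('a \<times> 'a) set" and q :: nat
  assumes "digraph V E"
    and "min_fvs_card V E = 1"
    and "q \<ge> 2"
  shows "q_solvable V E q \<longleftrightarrow> q = 2"
proof -
  obtain w where fvs: "feedback_vertex_set V E {w}"
    using min_fvs_card_attained[of V E] assms(2) by (auto simp: card_1_singleton_iff)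
  have "E \<subseteq> V \<times> V" using assms(1) unfolding digraph_def by simp
  then have "\<not> acyclic E"
    using min_fvs_card_le[of V E "{}"] assms(2) by (auto simp: feedback_vertex_set_empty_iff)
  then have "q_solvable V E 2" using q_solvable_2_if_cycle[OF assms(1)] by blast
  moreover have "\<not> q_solvable V E q" if "q \<noteq> 2"
  proof -
    have "3 \<le> q" using assms(3) that by linarith
    then show ?thesis by (rule not_q_solvable_if_feedback_vertex[OF assms(1) fvs])
  qed
  ultimately show ?thesis by auto
qed

end
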